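(* Let $q$ be a prime power and $m \ge 2$ an integer, and let $g = \gcd(q-1, m(m-1))$. For any partition $\lambda$ of $m$ such that $S_{\lambda,\mathbb{F}_q}$ is nonempty, $|D_{\lambda,\mathbb{F}_q}| \ge \frac{q-1}{g}$.
   Context: For a partition $\lambda = (\lambda_1,\dots,\lambda_k)$ of $m$ (positive integers summing to $m$), a monic $f \in \mathbb{F}_q[x]$ of degree $m$ has factorization type $\lambda$ if $f = \pi_1\cdots\pi_k$ with the $\pi_i$ distinct monic irreducible polynomials and $\deg \pi_i = \lambda_i$. $S_{\lambda,\mathbb{F}_q}$ is the set of monic squarefree polynomials in $\mathbb{F}_q[x]$ of factorization type $\lambda$, and $D_{\lambda,\mathbb{F}_q} = \{\operatorname{disc}(f) : f \in S_{\lambda,\mathbb{F}_q}\}$. For $f$ of degree $m\ge 2$ with leading coefficient $a_m$ and roots $\alpha_i$ in a splitting field, $\operatorname{disc}(f) = a_m^{2m-2}\prod_{i<j}(\alpha_i-\alpha_j)^2$. *)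

theory Defs
  imports "Subresultants.Resultant_Prelim" "HOL-Computational_Algebra.Squarefree"
    "HOL-Library.Multiset"
begin

definition is_partition :: "nat multiset \<Rightarrow> nat \<Rightarrow> bool" where
  "is_partition lam m \<longleftrightarrow> (\<forall>k \<in># lam. k > 0) \<and> sum_mset lam = m"

definition has_fact_type :: "'a::field poly \<Rightarrow> nat multiset \<Rightarrow> bool" where
  "has_fact_type f lam \<longleftrightarrow>
     (\<exists>P. finite P \<and> (\<forall>p\<in>P. monic p \<and> irreducible p) \<and> f = (\<Prod>p\<in>P. p)
          \<and> image_mset degree (mset_set P) = lam)"

definition S_set :: "nat multiset \<Rightarrow> 'a::field poly set" where
  "S_set lam = {f. monic f \<and> degree f = sum_mset lam \<and> squarefree f \<and> has_fact_type f lam}"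

text \<open>Discriminant of f of degree m \<ge> 2: (-1)^(m(m-1)/2) Res_{m,m-1}(f,f') / a_m,
  where Res_{m,m-1} is the Sylvester resultant with f' taken of formal degree m-1.
  This equals a_m^(2m-2) prod_{i<j} (alpha_i - alpha_j)^2.\<close>
definition disc :: "'a::field poly \<Rightarrow> 'a" where
  "disc f = (let m = degree f in
     (-1) ^ (m * (m - 1) div 2) * resultant_sub m (m - 1) f (pderiv f) / lead_coeff f)"

definition D_set :: "nat multiset \<Rightarrow> 'a::field set" where
  "D_set lam = disc ` (S_set lam :: 'a poly set)"

end

(* The substitution f(x) \<mapsto> c^m f(x/c) with c \<noteq> 0 multiplies all roots by c.  It is
   multiplicative and invertible, so it preserves monicity, squarefreeness and the factorization
   type, and it multiplies the discriminant by c^(m(m-1)).  Over a finite field a squarefree f is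
   coprime to f' (a polynomial with zero derivative is a p-th power), so disc f \<noteq> 0.  Hence
   D_lam contains the translate disc(f) \<cdot> {c^(m(m-1)) | c \<noteq> 0}, and every fibre of
   c \<mapsto> c^k on the unit group has at most gcd(q-1, k) elements. *)

theory Submission
  imports Defs "Berlekamp_Zassenhaus.Unique_Factorization_Poly" "HOL-Library.Cardinality"
begin

(* Polynomial_Factorization also defines an is_partition (on lists of sets); the theorem
   below refers to the one of Defs. *)
hide_const (open) Missing_List.is_partition

section \<open>Sylvester matrices and resultants\<close>

lemma sylvester_mat_sub_index_coeff:
  fixes p q :: "'a::comm_semiring_1 poly"
  assumes p: "degree p \<le> m" and q: "degree q \<le> n" and ij: "i < m + n" "j < m + n"
  shows "sylvester_mat_sub m n p q $$ (i, j) =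
    coeff (if i < n then monom 1 (n - 1 - i) * p else monom 1 (m + n - 1 - i) * q) (m + n - 1 - j)"
proof (cases "i < n")
  case True
  have "m + n - 1 - j - (n - 1 - i) = m + i - j" using True ij by linarith
  moreover have "coeff p (m + i - j) = 0" if "j < i" using that p by (intro coeff_eq_0) linarith
  ultimately show ?thesis using True ij by (auto simp: sylvester_mat_sub_index coeff_monom_mult)
next
  case False
  have "m + n - 1 - j - (m + n - 1 - i) = i - j" using False ij by linarith
  moreover have "coeff q (i - j) = 0" if "j < i - n" using that q by (intro coeff_eq_0) linarith
  ultimately show ?thesis using False ij by (auto simp: sylvester_mat_sub_index coeff_monom_mult)
qed

lemma coeff_sum_monom_reversed:
  "coeff (\<Sum>i<n. monom (c i) (n - 1 - i)) k = (if k < n then c (n - 1 - k) else 0)"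
proof -
  have "coeff (\<Sum>i<n. monom (c i) (n - 1 - i)) k = (\<Sum>i<n. if i = n - 1 - k \<and> k < n then c i else 0)"
    unfolding coeff_sum coeff_monom by (intro sum.cong) auto
  then show ?thesis by (cases "k < n") auto
qed

lemma coeff_mult_sum_monom_reversed:
  fixes p :: "'a::comm_semiring_1 poly"
  shows "coeff ((\<Sum>i<n. monom (c i) (n - 1 - i)) * p) k
    = (\<Sum>i<n. c i * coeff (monom 1 (n - 1 - i) * p) k)"
  unfolding sum_distrib_right coeff_sum by (intro sum.cong) (auto simp: coeff_monom_mult)

lemma index_transpose_sylvester_mult_vec:
  fixes p q :: "'a::comm_ring_1 poly"
  assumes p: "degree p \<le> m" and q: "degree q \<le> n" and v: "v \<in> carrier_vec (m + n)"
    and j: "j < m + n"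
  shows "(transpose_mat (sylvester_mat_sub m n p q) *\<^sub>v v) $ j
    = coeff ((\<Sum>i<n. monom (v $ i) (n - 1 - i)) * p + (\<Sum>i<m. monom (v $ (n + i)) (m - 1 - i)) * q)
        (m + n - 1 - j)"
proof -
  let ?M = "sylvester_mat_sub m n p q"
  let ?a = "\<Sum>i<n. monom (v $ i) (n - 1 - i)" and ?b = "\<Sum>i<m. monom (v $ (n + i)) (m - 1 - i)"
  have low: "(\<Sum>i\<in>{0..<n}. v $ i * ?M $$ (i, j)) = coeff (?a * p) (m + n - 1 - j)"
    unfolding coeff_mult_sum_monom_reversed atLeast0LessThan
    using j p q by (intro sum.cong) (simp_all add: sylvester_mat_sub_index_coeff)
  have "(\<Sum>i\<in>{n..<m + n}. v $ i * ?M $$ (i, j)) = (\<Sum>i<m. v $ (n + i) * ?M $$ (n + i, j))"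
    using sum.shift_bounds_nat_ivl[of "\<lambda>i. v $ i * ?M $$ (i, j)" 0 n m]
    by (simp add: add.commute atLeast0LessThan)
  also have "\<dots> = coeff (?b * q) (m + n - 1 - j)"
    unfolding coeff_mult_sum_monom_reversed
    using j p q by (intro sum.cong) (simp_all add: sylvester_mat_sub_index_coeff)
  finally have high: "(\<Sum>i\<in>{n..<m + n}. v $ i * ?M $$ (i, j)) = coeff (?b * q) (m + n - 1 - j)" .
  have "(transpose_mat ?M *\<^sub>v v) $ j = (\<Sum>i\<in>{0..<m + n}. v $ i * ?M $$ (i, j))"
    using j v by (simp add: col_transpose scalar_prod_def mult.commute)
  also have "\<dots> = (\<Sum>i\<in>{0..<n}. v $ i * ?M $$ (i, j)) + (\<Sum>i\<in>{n..<m + n}. v $ i * ?M $$ (i, j))"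
    by (rule sum.atLeastLessThan_concat[symmetric]) simp_all
  finally show ?thesis by (simp only: low high coeff_add)
qed

(* a and b are read off a nonzero kernel vector of the transposed Sylvester matrix. *)
lemma resultant_sub_eq_0_imp_relation:
  fixes p q :: "'a::field poly"
  assumes res: "resultant_sub m n p q = 0" and p: "degree p \<le> m" and q: "degree q \<le> n"
  obtains a b where "a * p + b * q = 0" "a \<noteq> 0 \<or> b \<noteq> 0" "b = 0 \<or> degree b < m"
proof -
  let ?N = "m + n"
  let ?M = "sylvester_mat_sub m n p q"
  have M: "?M \<in> carrier_mat ?N ?N" by (rule sylvester_mat_sub_carrier)
  have "det (transpose_mat ?M) = 0"
    using res by (simp add: resultant_sub_def det_transpose[OF M])
  then obtain v where v: "v \<in> carrier_vec ?N" "v \<noteq> 0\<^sub>v ?N" "transpose_mat ?M *\<^sub>v v = 0\<^sub>v ?N"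
    using det_0_iff_vec_prod_zero_field[of "transpose_mat ?M" ?N] M by auto
  define a where "a = (\<Sum>i<n. monom (v $ i) (n - 1 - i))"
  define b where "b = (\<Sum>i<m. monom (v $ (n + i)) (m - 1 - i))"
  have coeff_a: "coeff a k = (if k < n then v $ (n - 1 - k) else 0)" for k
    unfolding a_def by (rule coeff_sum_monom_reversed)
  have coeff_b: "coeff b k = (if k < m then v $ (n + (m - 1 - k)) else 0)" for k
    unfolding b_def by (rule coeff_sum_monom_reversed)
  have kernel: "coeff (a * p + b * q) (?N - 1 - j) = 0" if "j < ?N" for j
    using index_transpose_sylvester_mult_vec[OF p q v(1) that] v(3) that by (simp add: a_def b_def)
  have degree: "degree (a * p + b * q) < ?N"
  proof -
    have "?N \<noteq> 0"
    proof
      assume "?N = 0"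
      then have "v = 0\<^sub>v ?N" using v(1) by (intro eq_vecI) auto
      with v(2) show False by contradiction
    qed
    moreover have "a = 0 \<or> degree a < n" "b = 0 \<or> degree b < m"
      using coeff_a[of "degree a"] coeff_b[of "degree b"] by (metis leading_coeff_0_iff)+
    ultimately show ?thesis
      using degree_mult_le[of a p] degree_mult_le[of b q] degree_add_le_max[of "a * p" "b * q"] p q
      by auto
  qed
  have "a * p + b * q = 0"
  proof (rule poly_eqI)
    fix k
    show "coeff (a * p + b * q) k = coeff 0 k"
    proof (cases "k < ?N")
      case True
      then show ?thesis using kernel[of "?N - 1 - k"] by simp
    next
      case False
      then show ?thesis using degree coeff_eq_0[of "a * p + b * q" k] by simp
    qed
  qed
  moreover have "a \<noteq> 0 \<or> b \<noteq> 0"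
  proof (rule ccontr)
    assume "\<not> (a \<noteq> 0 \<or> b \<noteq> 0)"
    then have "a = 0" "b = 0" by simp_all
    have "v $ i = 0" if "i < ?N" for i
    proof (cases "i < n")
      case True
      then show ?thesis using coeff_a[of "n - 1 - i"] \<open>a = 0\<close> by simp
    next
      case False
      then have "?N - 1 - i < m" "n + (m - 1 - (?N - 1 - i)) = i" using that by linarith+
      then show ?thesis using coeff_b[of "?N - 1 - i"] \<open>b = 0\<close> by simp
    qed
    then have "v = 0\<^sub>v ?N" using v(1) by (intro eq_vecI) auto
    with v(2) show False by contradiction
  qed
  moreover have "b = 0 \<or> degree b < m"
    using coeff_b[of "degree b"] by (metis leading_coeff_0_iff)
  ultimately show ?thesis using that by blast
qed

lemma resultant_sub_nonzero_if_coprime: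
  fixes p q :: "'a::field poly"
  assumes cop: "coprime p q" and p: "degree p = m" "0 < m" and q: "degree q \<le> n"
  shows "resultant_sub m n p q \<noteq> 0"
proof
  assume "resultant_sub m n p q = 0"
  then obtain a b where rel: "a * p + b * q = 0" and ab: "a \<noteq> 0 \<or> b \<noteq> 0"
      and b: "b = 0 \<or> degree b < m"
    using resultant_sub_eq_0_imp_relation p q by (metis order_refl)
  have "a * p = (- b) * q" using rel by (simp add: eq_neg_iff_add_eq_0)
  then have "p dvd - b" using cop by (intro some_gcd.coprime_mult_cross_dvd)
  then have "b = 0" using b p by (metis divides_degree dvd_minus_iff leD)
  moreover have "p \<noteq> 0" using p by auto
  ultimately have "a = 0" using rel by simp
  with ab \<open>b = 0\<close> show False by simp
qed

lemma det_scale_rows_cols: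
  fixes A :: "'a::comm_ring_1 mat"
  assumes A: "A \<in> carrier_mat n n"
  shows "det (mat n n (\<lambda>(i,j). r i * A $$ (i,j) * s j)) = (\<Prod>i=0..<n. r i * s i) * det A"
proof -
  let ?B = "mat n n (\<lambda>(i,j). r i * A $$ (i,j) * s j)"
  have "signof p * (\<Prod>i=0..<n. ?B $$ (i, p i))
      = (\<Prod>i=0..<n. r i * s i) * (signof p * (\<Prod>i=0..<n. A $$ (i, p i)))"
    if p: "p permutes {0..<n}" for p
  proof -
    have "(\<Prod>i=0..<n. ?B $$ (i, p i)) = (\<Prod>i=0..<n. r i * A $$ (i, p i) * s (p i))"
      using permutes_in_image[OF p] by (intro prod.cong) auto
    also have "\<dots> = (\<Prod>i=0..<n. r i) * (\<Prod>i=0..<n. s (p i)) * (\<Prod>i=0..<n. A $$ (i, p i))"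
      by (simp add: prod.distrib ac_simps)
    also have "(\<Prod>i=0..<n. s (p i)) = (\<Prod>i=0..<n. s i)"
      using prod.permute[OF p, of s] by (simp add: comp_def)
    finally show ?thesis by (simp add: prod.distrib ac_simps)
  qed
  then show ?thesis
    by (simp add: det_def'[OF A] det_def'[of ?B n] sum_distrib_left)
qed

lemma resultant_sub_scale_variable:
  fixes p q :: "'a::field poly"
  assumes d: "d \<noteq> 0"
  shows "resultant_sub m n (smult \<alpha> (p \<circ>\<^sub>p [:0, d:])) (smult \<beta> (q \<circ>\<^sub>p [:0, d:]))
       = \<alpha> ^ n * \<beta> ^ m * d ^ (m * n) * resultant_sub m n p q"
proof -
  define r where "r i = (if i < n then \<alpha> * d ^ (m + i) else \<beta> * d ^ i)" for i
  define s where "s j = inverse d ^ j" for j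
  let ?M = "sylvester_mat_sub m n p q"
  have cancel: "d ^ i * inverse d ^ i = 1" for i
    using d by (simp add: power_mult_distrib[symmetric])
  have M: "sylvester_mat_sub m n (smult \<alpha> (p \<circ>\<^sub>p [:0, d:])) (smult \<beta> (q \<circ>\<^sub>p [:0, d:]))
      = mat (m + n) (m + n) (\<lambda>(i,j). r i * ?M $$ (i,j) * s j)"
    by (rule eq_matI)
      (auto simp: sylvester_mat_sub_index coeff_pcompose_linear r_def s_def
        power_diff_conv_inverse[OF d] cancel poly_0_coeff_0 ac_simps)
  have "(\<Prod>i=0..<m+n. r i * s i) = (\<Prod>i=0..<n. r i * s i) * (\<Prod>i=n..<m+n. r i * s i)"
    by (simp add: prod.atLeastLessThan_concat)
  also have "\<dots> = (\<Prod>i=0..<n. \<alpha> * d ^ m) * (\<Prod>i=n..<m+n. \<beta>)"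
  proof -
    have "r i * s i = \<alpha> * d ^ m * (d ^ i * inverse d ^ i)" if "i < n" for i
      using that by (simp add: r_def s_def power_add ac_simps)
    moreover have "r i * s i = \<beta> * (d ^ i * inverse d ^ i)" if "n \<le> i" for i
      using that by (simp add: r_def s_def ac_simps)
    ultimately show ?thesis by (simp add: cancel)
  qed
  finally have "(\<Prod>i=0..<m+n. r i * s i) = \<alpha> ^ n * \<beta> ^ m * d ^ (m * n)"
    by (simp add: power_mult_distrib power_mult mult.commute)
  then show ?thesis
    unfolding resultant_sub_def M by (simp add: det_scale_rows_cols[OF sylvester_mat_sub_carrier])
qed

section \<open>Rescaling the roots\<close>

definition scale_roots :: "'a::field \<Rightarrow> 'a poly \<Rightarrow> 'a poly" where
  "scale_roots c p = smult (c ^ degree p) (p \<circ>\<^sub>p [:0, inverse c:])"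

lemma degree_scale_roots [simp]: "c \<noteq> 0 \<Longrightarrow> degree (scale_roots c p) = degree p"
  by (simp add: scale_roots_def degree_pcompose)

lemma coeff_scale_roots_degree [simp]: "c \<noteq> 0 \<Longrightarrow> coeff (scale_roots c p) (degree p) = lead_coeff p"
  by (simp add: scale_roots_def degree_pcompose coeff_pcompose_linear power_inverse)

lemma scale_roots_mult:
  assumes "c \<noteq> 0"
  shows "scale_roots c (p * q) = scale_roots c p * scale_roots c q"
proof (cases "p = 0 \<or> q = 0")
  case False
  then show ?thesis
    by (simp add: scale_roots_def degree_mult_eq pcompose_mult power_add mult_ac)
qed (auto simp: scale_roots_def)

lemma scale_roots_1 [simp]: "scale_roots c 1 = 1"
  by (simp add: scale_roots_def)

lemma scale_roots_prod:
  "c \<noteq> 0 \<Longrightarrow> scale_roots c (\<Prod>x\<in>A. f x) = (\<Prod>x\<in>A. scale_roots c (f x))"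
  by (induction A rule: infinite_finite_induct) (simp_all add: scale_roots_mult)

lemma scale_roots_inverse [simp]:
  assumes c: "c \<noteq> 0"
  shows "scale_roots (inverse c) (scale_roots c p) = p"
proof -
  have "p \<circ>\<^sub>p [:0, inverse c:] \<circ>\<^sub>p [:0, c:] = p \<circ>\<^sub>p ([:0, inverse c:] \<circ>\<^sub>p [:0, c:])"
    by (rule pcompose_assoc[symmetric])
  also have "[:0, inverse c:] \<circ>\<^sub>p [:0, c:] = [:0, 1:]"
    using c by (simp add: pcompose_pCons)
  finally have "p \<circ>\<^sub>p [:0, inverse c:] \<circ>\<^sub>p [:0, c:] = p"
    by (simp only: pcompose_idR)
  moreover have "inverse c ^ degree p * c ^ degree p = 1"
    using c by (simp add: power_mult_distrib[symmetric])
  ultimately show ?thesis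
    using c by (simp add: scale_roots_def pcompose_smult)
qed

lemma scale_roots_eq_0_iff [simp]: "c \<noteq> 0 \<Longrightarrow> scale_roots c p = 0 \<longleftrightarrow> p = 0"
  by (metis degree_scale_roots coeff_scale_roots_degree leading_coeff_0_iff)

lemma is_unit_scale_roots_iff [simp]: "c \<noteq> 0 \<Longrightarrow> is_unit (scale_roots c p) \<longleftrightarrow> is_unit p"
  by (metis degree_scale_roots is_unit_iff_degree scale_roots_eq_0_iff)

lemma irreducible_scale_roots:
  assumes c: "c \<noteq> 0" and p: "irreducible p"
  shows "irreducible (scale_roots c p)"
proof (rule irreducibleI)
  show "scale_roots c p \<noteq> 0" using p c by (metis not_irreducible_zero scale_roots_eq_0_iff)
  show "\<not> is_unit (scale_roots c p)"
    using p c by (metis irreducible_not_unit is_unit_scale_roots_iff)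
  fix a b assume "scale_roots c p = a * b"
  then have "p = scale_roots (inverse c) a * scale_roots (inverse c) b"
    using c by (metis scale_roots_inverse scale_roots_mult inverse_nonzero_iff_nonzero)
  then show "is_unit a \<or> is_unit b"
    using p c by (auto dest: irreducibleD)
qed

lemma squarefree_scale_roots:
  assumes c: "c \<noteq> 0" and p: "squarefree p"
  shows "squarefree (scale_roots c p)"
proof (rule squarefreeI)
  fix x assume "x ^ 2 dvd scale_roots c p"
  then obtain k where "scale_roots c p = x ^ 2 * k" by (elim dvdE)
  then have "p = scale_roots (inverse c) x ^ 2 * scale_roots (inverse c) k"
    using c
    by (metis power2_eq_square scale_roots_inverse scale_roots_mult inverse_nonzero_iff_nonzero)
  then have "is_unit (scale_roots (inverse c) x)"
    using p by (intro squarefreeD) auto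
  then show "is_unit x" using c by (metis is_unit_scale_roots_iff inverse_nonzero_iff_nonzero)
qed

lemma scale_roots_in_S_set:
  assumes c: "c \<noteq> 0" and f: "f \<in> S_set lam"
  shows "scale_roots c f \<in> S_set lam"
proof -
  from f have "monic f" "degree f = sum_mset lam" "squarefree f"
    and "\<exists>P. finite P \<and> (\<forall>p\<in>P. monic p \<and> irreducible p) \<and> f = (\<Prod>p\<in>P. p)
          \<and> image_mset degree (mset_set P) = lam"
    unfolding S_set_def has_fact_type_def by auto
  then obtain P where P: "finite P" "\<forall>p\<in>P. monic p \<and> irreducible p" "f = (\<Prod>p\<in>P. p)"
      "image_mset degree (mset_set P) = lam"
    by blast
  have inj: "inj_on (scale_roots c) P"
    using c by (metis inj_on_inverseI scale_roots_inverse)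
  have "has_fact_type (scale_roots c f) lam"
    unfolding has_fact_type_def
  proof (intro exI[of _ "scale_roots c ` P"] conjI ballI)
    show "finite (scale_roots c ` P)" using P by simp
    show "monic q" "irreducible q" if "q \<in> scale_roots c ` P" for q
      using that P(2) c irreducible_scale_roots by auto
    show "scale_roots c f = (\<Prod>p\<in>scale_roots c ` P. p)"
      using P(3) c by (simp add: prod.reindex[OF inj] scale_roots_prod)
    show "image_mset degree (mset_set (scale_roots c ` P)) = lam"
      using P(4) c by (simp add: image_mset_mset_set[OF inj, symmetric] multiset.map_comp comp_def)
  qed
  moreover have "monic (scale_roots c f)" using \<open>monic f\<close> c by simp
  ultimately show ?thesis
    using \<open>degree f = sum_mset lam\<close> \<open>squarefree f\<close> c
    unfolding S_set_def by (simp add: squarefree_scale_roots)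
qed

lemma disc_scale_roots:
  fixes f :: "'a::field poly"
  assumes c: "c \<noteq> 0"
  shows "disc (scale_roots c f) = c ^ (degree f * (degree f - 1)) * disc f"
proof -
  define m where "m = degree f"
  have "pderiv (scale_roots c f) = smult (c ^ m * inverse c) (pderiv f \<circ>\<^sub>p [:0, inverse c:])"
    by (simp add: scale_roots_def m_def pderiv_smult pderiv_pcompose pderiv_pCons)
  then have "resultant_sub m (m - 1) (scale_roots c f) (pderiv (scale_roots c f))
      = (c ^ m) ^ (m - 1) * (c ^ m * inverse c) ^ m * inverse c ^ (m * (m - 1))
        * resultant_sub m (m - 1) f (pderiv f)"
    using c by (simp add: scale_roots_def m_def resultant_sub_scale_variable)
  also have "(c ^ m) ^ (m - 1) * (c ^ m * inverse c) ^ m * inverse c ^ (m * (m - 1))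
      = c ^ (m * (m - 1))"
  proof (cases "m = 0")
    case False
    define k where "k = m * (m - 1)"
    have "c ^ m * inverse c = c ^ (m - 1)"
      using power_diff_conv_inverse[OF c, of 1 m] False by simp
    moreover have "(c ^ m) ^ (m - 1) = c ^ k" "(c ^ (m - 1)) ^ m = c ^ k"
      by (simp_all add: k_def power_mult[symmetric] mult.commute)
    ultimately have "(c ^ m) ^ (m - 1) * (c ^ m * inverse c) ^ m * inverse c ^ k
        = c ^ k * (c ^ k * inverse c ^ k)"
      by simp
    also have "c ^ k * inverse c ^ k = 1"
      using c by (simp add: power_mult_distrib[symmetric])
    finally show ?thesis by (simp add: k_def)
  qed simp
  finally show ?thesis
    using c by (simp add: disc_def Let_def m_def)
qed

section \<open>Finite fields\<close>

lemma two_le_card: "2 \<le> CARD('a::{finite,zero_neq_one})"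
proof -
  have "card {0::'a, 1} \<le> CARD('a)" by (rule card_mono) auto
  then show ?thesis by simp
qed

lemma prime_CHAR_finite_field: "prime CHAR('a::{finite,field})"
  by (rule prime_CHAR_semidom) (rule finite_imp_CHAR_pos, simp)

lemma power_card_minus_1_eq_1:
  fixes u :: "'a::{finite,field}"
  assumes "u \<noteq> 0"
  shows "u ^ (CARD('a) - 1) = 1"
proof -
  let ?U = "UNIV - {0::'a}"
  have "(\<Prod>x\<in>?U. u * x) = (\<Prod>x\<in>?U. x)"
    by (rule prod.reindex_bij_witness[of _ "\<lambda>y. y / u" "\<lambda>y. u * y"]) (use assms in auto)
  moreover have "(\<Prod>x\<in>?U. u * x) = u ^ card ?U * (\<Prod>x\<in>?U. x)"
    by (simp add: prod.distrib)
  moreover have "(\<Prod>x\<in>?U. x) \<noteq> 0" by simp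
  ultimately show ?thesis by (simp add: card_Diff_subset)
qed

lemma card_roots_of_unity_le:
  assumes "0 < g"
  shows "card {u::'a::idom. u ^ g = 1} \<le> g"
proof -
  let ?p = "monom (1::'a) g - 1"
  have lead: "coeff ?p g = 1" using assms by (simp add: coeff_monom)
  then have "?p \<noteq> 0" by (intro notI) simp
  moreover have "g \<le> degree ?p" using lead by (intro le_degree) simp
  moreover have "degree ?p \<le> g" by (intro degree_diff_le) (auto simp: degree_monom_le)
  moreover have "{u::'a. u ^ g = 1} = {x. poly ?p x = 0}" by (auto simp: poly_monom)
  ultimately show ?thesis using card_poly_roots_bound[of ?p] by simp
qed

lemma power_gcd_card_minus_1_eq_1:
  fixes u :: "'a::{finite,field}"
  assumes "u \<noteq> 0" "u ^ k = 1"
  shows "u ^ gcd (CARD('a) - 1) k = 1"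
proof -
  let ?q = "CARD('a) - 1"
  have "?q \<noteq> 0" using two_le_card[where 'a = 'a] by simp
  then obtain x y where xy: "?q * x = k * y + gcd ?q k" using bezout_nat by blast
  have "1 = (u ^ ?q) ^ x" using power_card_minus_1_eq_1[OF assms(1)] by simp
  also have "\<dots> = (u ^ k) ^ y * u ^ gcd ?q k" by (metis power_mult power_add xy)
  finally show ?thesis using assms(2) by simp
qed

lemma card_nonzero_powers:
  "CARD('a::{finite,field}) - 1 \<le> card ((\<lambda>c. c ^ k) ` (UNIV - {0::'a})) * gcd (CARD('a) - 1) k"
proof -
  let ?g = "gcd (CARD('a) - 1) k"
  let ?U = "UNIV - {0::'a}"
  let ?P = "(\<lambda>c. c ^ k) ` ?U"
  have "0 < ?g" using two_le_card[where 'a = 'a] by simp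
  have fibre: "card {c \<in> ?U. c ^ k = y} \<le> ?g" if "y \<in> ?P" for y
  proof -
    from that obtain c0 where c0: "c0 \<noteq> 0" "y = c0 ^ k" by auto
    have "(c / c0) ^ ?g = 1" if "c \<in> ?U" "c ^ k = y" for c
      using that c0 by (intro power_gcd_card_minus_1_eq_1) (auto simp: power_divide)
    then have "(\<lambda>c. c / c0) ` {c \<in> ?U. c ^ k = y} \<subseteq> {u. u ^ ?g = 1}" by auto
    moreover have "inj_on (\<lambda>c. c / c0) {c \<in> ?U. c ^ k = y}"
      using c0 by (auto simp: inj_on_def)
    ultimately have "card {c \<in> ?U. c ^ k = y} \<le> card {u::'a. u ^ ?g = 1}"
      by (intro card_inj_on_le) simp_all
    also have "\<dots> \<le> ?g" using \<open>0 < ?g\<close> by (rule card_roots_of_unity_le)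
    finally show ?thesis .
  qed
  have "card ?U = card (\<Union>y\<in>?P. {c \<in> ?U. c ^ k = y})" by (intro arg_cong[where f = card]) auto
  also have "\<dots> \<le> (\<Sum>y\<in>?P. card {c \<in> ?U. c ^ k = y})" by (rule card_UN_le) simp
  also have "\<dots> \<le> (\<Sum>y\<in>?P. ?g)" by (rule sum_mono) (rule fibre)
  finally show ?thesis by (simp add: card_Diff_subset)
qed

lemma surj_power_CHAR: "surj (\<lambda>x::'a::{finite,field}. x ^ CHAR('a))"
proof -
  note p = prime_CHAR_finite_field[where 'a = 'a]
  have "inj (\<lambda>x::'a. x ^ CHAR('a))"
  proof (rule injI)
    fix x y :: 'a assume eq: "x ^ CHAR('a) = y ^ CHAR('a)"
    have "(x - y) ^ CHAR('a) = x ^ CHAR('a) + (- y) ^ CHAR('a)"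
      using freshmans_dream[OF p refl, of x "- y"] by simp
    also have "(- y) ^ CHAR('a) = - (y ^ CHAR('a))"
      by (rule minus_power_prime_CHAR[OF refl p])
    finally show "x = y" using eq by simp
  qed
  then show ?thesis by (simp add: finite_UNIV_inj_surj)
qed

lemma pderiv_eq_0_imp_power_CHAR:
  fixes g :: "'a::{finite,field} poly"
  assumes "pderiv g = 0"
  obtains h where "g = h ^ CHAR('a)"
proof -
  let ?p = "CHAR('a)"
  note p = prime_CHAR_finite_field[where 'a = 'a]
  define root where "root y = (SOME x::'a. x ^ ?p = y)" for y
  have root: "root y ^ ?p = y" for y
    unfolding root_def by (rule someI_ex) (metis surjD surj_power_CHAR)
  have dvd: "?p dvd k" if "coeff g k \<noteq> 0" for k
  proof (cases k)
    case (Suc k')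
    have "of_nat k * coeff g k = 0"
      using arg_cong[OF assms, of "\<lambda>q. coeff q k'"] by (simp add: coeff_pderiv Suc)
    then show ?thesis using that by (simp add: of_nat_eq_0_iff_char_dvd)
  qed simp
  have "(\<Sum>j\<le>degree g. monom (root (coeff g (j * ?p))) j) ^ ?p
      = (\<Sum>j\<le>degree g. monom (coeff g (j * ?p)) (j * ?p))"
    by (simp add: freshmans_dream_sum p monom_power root)
  also have "\<dots> = g"
  proof (rule poly_eqI)
    fix k
    have "coeff (\<Sum>j\<le>degree g. monom (coeff g (j * ?p)) (j * ?p)) k
        = (\<Sum>j\<le>degree g. if j * ?p = k then coeff g k else 0)"
      by (auto simp: coeff_sum coeff_monom intro!: sum.cong)
    also have "\<dots> = coeff g k"
    proof (cases "coeff g k = 0")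
      case False
      from dvd[OF False] obtain j where "k = ?p * j" by (elim dvdE)
      then have j: "k = j * ?p" by (simp add: mult.commute)
      have "j \<le> j * ?p" using prime_gt_0_nat[OF p] by (cases ?p) auto
      then have "j \<le> degree g" using le_degree[OF False] j by linarith
      have "(\<Sum>j'\<le>degree g. if j' * ?p = k then coeff g k else 0)
          = (\<Sum>j'\<le>degree g. if j' = j then coeff g k else 0)"
        using prime_gt_0_nat[OF p] j by (intro sum.cong) auto
      then show ?thesis using \<open>j \<le> degree g\<close> by simp
    qed (auto intro: sum.neutral)
    finally show "coeff (\<Sum>j\<le>degree g. monom (coeff g (j * ?p)) (j * ?p)) k = coeff g k" .
  qed
  finally show ?thesis using that by metis
qed

lemma coprime_pderiv_if_squarefree:
  fixes f :: "'a::{finite,field} poly"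
  assumes sf: "squarefree f"
  shows "coprime f (pderiv f)"
proof (rule ccontr)
  assume "\<not> coprime f (pderiv f)"
  then obtain r where r: "r dvd f" "r dvd pderiv f" "\<not> is_unit r"
    by (meson not_coprime_iff_common_factor)
  have "r \<noteq> 0" using r(1) sf by auto
  then obtain F where "mset_factors F r" using mset_factors_exist r(3) by blast
  then obtain g where g: "irreducible g" "g dvd r"
    by (elim mset_factorsE multiset_nonemptyE) (auto intro: dvd_prod_mset)
  obtain k where k: "f = g * k" using dvd_trans[OF g(2) r(1)] by (elim dvdE)
  have "g dvd pderiv f" using g(2) r(2) by (rule dvd_trans)
  then have "g dvd k * pderiv g"
    unfolding k pderiv_mult by (simp add: dvd_add_right_iff)
  then have "g dvd k \<or> g dvd pderiv g"
    using field_poly_irreducible_imp_prime[OF g(1)] by (simp add: prime_elem_dvd_mult_iff)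
  then show False
  proof
    assume "g dvd k"
    then have "g ^ 2 dvd f" unfolding k power2_eq_square by (rule mult_dvd_mono[OF dvd_refl])
    then show False using sf g(1) by (auto dest: squarefreeD irreducible_not_unit)
  next
    assume gg: "g dvd pderiv g"
    have "g \<noteq> 0" using g(1) by auto
    then have "0 < degree g" using irreducible_not_unit[OF g(1)] is_unit_iff_degree by auto
    have "pderiv g = 0"
    proof (rule ccontr)
      assume "pderiv g \<noteq> 0"
      with gg have "degree g \<le> degree (pderiv g)" by (rule dvd_imp_degree_le)
      with degree_pderiv_le[of g] \<open>0 < degree g\<close> show False by simp
    qed
    then obtain h where h: "g = h ^ CHAR('a)" by (rule pderiv_eq_0_imp_power_CHAR)
    have "CHAR('a) \<ge> 2" by (rule prime_ge_2_nat[OF prime_CHAR_finite_field])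
    then have "h ^ 2 dvd f" unfolding k h by (intro dvd_mult2 le_imp_power_dvd)
    then have "is_unit h" by (rule squarefreeD[OF sf])
    then show False using g(1) h by (simp add: irreducible_not_unit is_unit_power_iff)
  qed
qed

lemma disc_nonzero_if_squarefree:
  fixes f :: "'a::{finite,field} poly"
  assumes "squarefree f" "0 < degree f"
  shows "disc f \<noteq> 0"
proof -
  have "resultant_sub (degree f) (degree f - 1) f (pderiv f) \<noteq> 0"
    using assms degree_pderiv_le[of f]
    by (intro resultant_sub_nonzero_if_coprime coprime_pderiv_if_squarefree) auto
  then show ?thesis using assms by (auto simp: disc_def Let_def)
qed

lemma power_mult_disc_in_D_set:
  assumes f: "f \<in> S_set lam" and c: "c \<noteq> 0"
  shows "c ^ (degree f * (degree f - 1)) * disc f \<in> D_set lam"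
proof -
  have "disc (scale_roots c f) = c ^ (degree f * (degree f - 1)) * disc f"
    using c by (rule disc_scale_roots)
  moreover have "scale_roots c f \<in> S_set lam" using c f by (rule scale_roots_in_S_set)
  ultimately show ?thesis unfolding D_set_def by (metis image_eqI)
qed

theorem lemma4p2:
  fixes lam :: "nat multiset" and m :: nat
  assumes "m \<ge> 2"
    and "is_partition lam m"
    and "(S_set lam :: ('a::{finite,field}) poly set) \<noteq> {}"
  shows "real (card (D_set lam :: 'a set)) \<ge>
           (real (card (UNIV :: 'a set)) - 1) / real (gcd (card (UNIV :: 'a set) - 1) (m * (m - 1)))"
proof -
  let ?k = "m * (m - 1)"
  let ?powers = "(\<lambda>c. c ^ ?k) ` (UNIV - {0::'a})"
  obtain f :: "'a poly" where f: "f \<in> S_set lam" using assms(3) by blast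
  then have deg: "degree f = m" and "squarefree f"
    using assms(2) unfolding S_set_def Defs.is_partition_def by auto
  then have "disc f \<noteq> 0" using assms(1) by (intro disc_nonzero_if_squarefree) auto
  have "(\<lambda>y. y * disc f) ` ?powers \<subseteq> D_set lam"
    using power_mult_disc_in_D_set[OF f] deg by auto
  moreover have "inj_on (\<lambda>y. y * disc f) ?powers" using \<open>disc f \<noteq> 0\<close> by (auto intro: inj_onI)
  ultimately have "card ?powers \<le> card (D_set lam :: 'a set)" by (intro card_inj_on_le) simp_all
  then have "CARD('a) - 1 \<le> card (D_set lam :: 'a set) * gcd (CARD('a) - 1) ?k"
    using card_nonzero_powers[where 'a = 'a, of ?k] by (meson le_trans mult_le_mono1)
  then show ?thesis
    using two_le_card[where 'a = 'a] by (simp add: pos_divide_le_eq of_nat_diff flip: of_nat_mult)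
qed

end
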